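(* Let $H$ be a graph on $h$ vertices with $\chi(H)=r\geq 3$ and $\gcd(H)=1$. Then for every sufficiently large integer $n$ there exists a balanced $r$-partite graph $G$ on $rn$ vertices with $\delta^*(G)\geq\left(1-\frac{1}{\chi^*(H)}\right)n-1=\left(1-\frac{1}{\chi_{\rm cr}(H)}\right)n-1$ that has no perfect $H$-tiling.
   Context: An $H$-tiling in $G$ is a collection of vertex-disjoint copies of $H$ in $G$; it is perfect if it covers every vertex of $G$. For an $r$-partite graph $G$ with vertex classes $V_1,\dots,V_r$, $G$ is balanced if all classes have the same size, and $\delta^*(G)$ is the largest integer $m$ such that for all $i\neq j$ every vertex of $V_i$ has at least $m$ neighbours in $V_j$. For $H$ with $\chi(H)=r$, let $\mathcal C$ be the set of proper $r$-colourings of $H$ with colour classes $X_1^\phi,\dots,X_r^\phi$, and $\mathcal D(H)=\bigcup_{\phi\in\mathcal C}\{|X_i^\phi|-|X_j^\phi|: i,j\in[r]\}$; $\gcd(H)$ is the greatest common divisor of the elements of $\mathcal D(H)$ if $\mathcal D(H)\ne\{0\}$ and $\infty$ otherwise. $\sigma(H)=\min_{\phi\in\mathcal C,\,i\in[r]}|X_i^\phi|/|V(H)|$, $\chi_{\rm cr}(H)=(\chi(H)-1)/(1-\sigma(H))$, and $\chi^*(H)=\chi_{\rm cr}(H)$ when $\gcd(H)=1$. *)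

theory Defs
  imports Complex_Main
begin

definition is_graph :: "'a set \<Rightarrow> ('a \<Rightarrow> 'a \<Rightarrow> bool) \<Rightarrow> bool" where
  "is_graph V E \<longleftrightarrow> finite V \<and> (\<forall>u v. E u v \<longrightarrow> u \<in> V \<and> v \<in> V)
     \<and> (\<forall>u v. E u v \<longrightarrow> E v u) \<and> (\<forall>v. \<not> E v v)"

definition proper_colouring :: "'a set \<Rightarrow> ('a \<Rightarrow> 'a \<Rightarrow> bool) \<Rightarrow> nat \<Rightarrow> ('a \<Rightarrow> nat) \<Rightarrow> bool" where
  "proper_colouring V E k \<phi> \<longleftrightarrow> (\<forall>v\<in>V. \<phi> v < k) \<and> (\<forall>u\<in>V. \<forall>v\<in>V. E u v \<longrightarrow> \<phi> u \<noteq> \<phi> v)"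

definition chromatic_number :: "'a set \<Rightarrow> ('a \<Rightarrow> 'a \<Rightarrow> bool) \<Rightarrow> nat" where
  "chromatic_number V E = (LEAST k. \<exists>\<phi>. proper_colouring V E k \<phi>)"

definition colour_class :: "'a set \<Rightarrow> ('a \<Rightarrow> nat) \<Rightarrow> nat \<Rightarrow> 'a set" where
  "colour_class V \<phi> i = {v \<in> V. \<phi> v = i}"

definition diff_set :: "'a set \<Rightarrow> ('a \<Rightarrow> 'a \<Rightarrow> bool) \<Rightarrow> int set" where
  "diff_set V E = {int (card (colour_class V \<phi> i)) - int (card (colour_class V \<phi> j)) | \<phi> i j.
      proper_colouring V E (chromatic_number V E) \<phi> \<and> i < chromatic_number V E \<and> j < chromatic_number V E}"

definition gcd_is_one :: "'a set \<Rightarrow> ('a \<Rightarrow> 'a \<Rightarrow> bool) \<Rightarrow> bool" where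
  "gcd_is_one V E \<longleftrightarrow> diff_set V E \<noteq> {0} \<and> Gcd (diff_set V E) = 1"

definition sigma :: "'a set \<Rightarrow> ('a \<Rightarrow> 'a \<Rightarrow> bool) \<Rightarrow> real" where
  "sigma V E = real (Min {card (colour_class V \<phi> i) | \<phi> i.
      proper_colouring V E (chromatic_number V E) \<phi> \<and> i < chromatic_number V E}) / real (card V)"

definition chi_cr :: "'a set \<Rightarrow> ('a \<Rightarrow> 'a \<Rightarrow> bool) \<Rightarrow> real" where
  "chi_cr V E = (real (chromatic_number V E) - 1) / (1 - sigma V E)"

definition part_class :: "nat \<Rightarrow> nat \<Rightarrow> (nat \<times> nat) set" where
  "part_class n i = {i} \<times> {0..<n}"

definition balanced_rpartite :: "nat \<Rightarrow> nat \<Rightarrow> (nat \<times> nat \<Rightarrow> nat \<times> nat \<Rightarrow> bool) \<Rightarrow> bool" where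
  "balanced_rpartite r n E \<longleftrightarrow> is_graph ({0..<r} \<times> {0..<n}) E
     \<and> (\<forall>i<r. \<forall>u\<in>part_class n i. \<forall>v\<in>part_class n i. \<not> E u v)"

definition delta_star :: "nat \<Rightarrow> nat \<Rightarrow> (nat \<times> nat \<Rightarrow> nat \<times> nat \<Rightarrow> bool) \<Rightarrow> nat" where
  "delta_star r n E = Min {card {u \<in> part_class n j. E v u} | v i j.
      i < r \<and> j < r \<and> i \<noteq> j \<and> v \<in> part_class n i}"

definition embeds :: "'a set \<Rightarrow> ('a \<Rightarrow> 'a \<Rightarrow> bool) \<Rightarrow> 'b set \<Rightarrow> ('b \<Rightarrow> 'b \<Rightarrow> bool) \<Rightarrow> ('a \<Rightarrow> 'b) \<Rightarrow> bool" where
  "embeds VH EH VG EG f \<longleftrightarrow> inj_on f VH \<and> f ` VH \<subseteq> VG \<and> (\<forall>u\<in>VH. \<forall>v\<in>VH. EH u v \<longrightarrow> EG (f u) (f v))"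

definition perfect_tiling :: "'a set \<Rightarrow> ('a \<Rightarrow> 'a \<Rightarrow> bool) \<Rightarrow> 'b set \<Rightarrow> ('b \<Rightarrow> 'b \<Rightarrow> bool) \<Rightarrow> bool" where
  "perfect_tiling VH EH VG EG \<longleftrightarrow> (\<exists>T. (\<forall>f\<in>T. embeds VH EH VG EG f)
     \<and> (\<forall>f\<in>T. \<forall>g\<in>T. f ` VH \<noteq> g ` VH \<longrightarrow> f ` VH \<inter> g ` VH = {})
     \<and> (\<Union>f\<in>T. f ` VH) = VG)"

end

theory Submission
  imports Defs
begin

text \<open>Space barrier. Split the column indices \<open>{0..<n}\<close> into \<open>r\<close> blocks, the first \<open>r - 1\<close> of
  width \<open>c\<close>, and join two vertices iff they lie in different vertex classes and different blocks.
  Reading off the block of each vertex properly \<open>r\<close>-colours every copy of \<open>H\<close>, so each copy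
  meets the last block in at least \<open>\<sigma>(H) h\<close> vertices. A perfect tiling has \<open>rn/h\<close> copies, which
  together need \<open>\<sigma>(H) r n\<close> vertices in the last block; taking \<open>c\<close> just above
  \<open>(1 - \<sigma>(H)) n / (r - 1) = n / \<chi>\<^sub>c\<^sub>r(H)\<close> makes the last block too small, while every vertex still
  misses at most \<open>c\<close> vertices of each other class.\<close>

lemma chromatic_number_colouring_exists:
  assumes "is_graph V E"
  shows "\<exists>\<phi>. proper_colouring V E (chromatic_number V E) \<phi>"
proof -
  have fin: "finite V" using assms unfolding is_graph_def by auto
  obtain k :: nat and f where kf: "V = f ` {i. i<k}" "inj_on f {i. i<k}"
    using finite_imp_nat_seg_image_inj_on[OF fin] by blast
  define \<phi> where "\<phi> = inv_into {i. i<k} f"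
  have "proper_colouring V E k \<phi>"
    unfolding proper_colouring_def
  proof (intro conjI ballI impI)
    fix v assume "v \<in> V"
    thus "\<phi> v < k" unfolding \<phi>_def using kf inv_into_into[of v f "{i. i<k}"] by auto
  next
    fix u v assume uv: "u \<in> V" "v \<in> V" "E u v"
    have "u \<noteq> v" using assms uv(3) unfolding is_graph_def by auto
    moreover have "f (\<phi> u) = u" "f (\<phi> v) = v" unfolding \<phi>_def using uv kf by (auto intro: f_inv_into_f)
    ultimately show "\<phi> u \<noteq> \<phi> v" by metis
  qed
  then have "\<exists>k \<phi>. proper_colouring V E k \<phi>" by blast
  then have "\<exists>\<phi>. proper_colouring V E (LEAST k. \<exists>\<phi>. proper_colouring V E k \<phi>) \<phi>"
    by (rule LeastI_ex)
  thus ?thesis unfolding chromatic_number_def .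
qed

lemma not_proper_colouring_below_chromatic_number:
  "k < chromatic_number V E \<Longrightarrow> \<not> proper_colouring V E k \<phi>"
  unfolding chromatic_number_def using not_less_Least by blast

lemma colour_class_nonempty:
  assumes \<phi>: "proper_colouring V E (chromatic_number V E) \<phi>" and i: "i < chromatic_number V E"
  shows "colour_class V \<phi> i \<noteq> {}"
proof
  let ?k = "chromatic_number V E"
  assume "colour_class V \<phi> i = {}"
  then have unused: "\<phi> v \<noteq> i" if "v \<in> V" for v using that unfolding colour_class_def by auto
  \<comment> \<open>recolour the last colour with the unused colour \<open>i\<close>\<close>
  define \<psi> where "\<psi> = (\<lambda>v. if \<phi> v = ?k - 1 then i else \<phi> v)"
  have "proper_colouring V E (?k - 1) \<psi>"
    unfolding proper_colouring_def
  proof (intro conjI ballI impI)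
    fix v assume v: "v \<in> V"
    have "\<phi> v < ?k" using \<phi> v unfolding proper_colouring_def by auto
    thus "\<psi> v < ?k - 1" using unused[OF v] i unfolding \<psi>_def by auto
  next
    fix u v assume uv: "u \<in> V" "v \<in> V" "E u v"
    have "\<phi> u \<noteq> \<phi> v" using \<phi> uv unfolding proper_colouring_def by auto
    thus "\<psi> u \<noteq> \<psi> v" using unused[OF uv(1)] unused[OF uv(2)] unfolding \<psi>_def by auto
  qed
  moreover have "?k - 1 < ?k" using i by simp
  ultimately show False using not_proper_colouring_below_chromatic_number by blast
qed

definition min_colour_class :: "'a set \<Rightarrow> ('a \<Rightarrow> 'a \<Rightarrow> bool) \<Rightarrow> nat" where
  "min_colour_class V E = Min {card (colour_class V \<phi> i) | \<phi> i.
      proper_colouring V E (chromatic_number V E) \<phi> \<and> i < chromatic_number V E}"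

lemma sigma_eq_min_colour_class: "sigma V E = real (min_colour_class V E) / real (card V)"
  unfolding sigma_def min_colour_class_def ..

lemma finite_colour_class_cards:
  "finite V \<Longrightarrow> finite {card (colour_class V \<phi> i) | \<phi> i. P \<phi> i}"
  by (rule finite_subset[of _ "{0..card V}"]) (auto simp: colour_class_def intro!: card_mono)

lemma min_colour_class_le:
  assumes "finite V" "proper_colouring V E (chromatic_number V E) \<phi>" "i < chromatic_number V E"
  shows "min_colour_class V E \<le> card (colour_class V \<phi> i)"
proof -
  have "finite {card (colour_class V \<phi> i) | \<phi> i.
      proper_colouring V E (chromatic_number V E) \<phi> \<and> i < chromatic_number V E}"
    using assms(1) by (rule finite_colour_class_cards)
  thus ?thesis unfolding min_colour_class_def by (rule Min_le) (use assms(2,3) in blast)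
qed

lemma min_colour_class_pos:
  assumes "is_graph V E" "chromatic_number V E > 0"
  shows "min_colour_class V E > 0"
proof -
  let ?k = "chromatic_number V E"
  let ?S = "{card (colour_class V \<phi> i) | \<phi> i. proper_colouring V E ?k \<phi> \<and> i < ?k}"
  have fin: "finite V" using assms(1) unfolding is_graph_def by simp
  have "finite ?S" using fin by (rule finite_colour_class_cards)
  moreover have "?S \<noteq> {}"
    using chromatic_number_colouring_exists[OF assms(1)] assms(2) by blast
  ultimately have "min_colour_class V E \<in> ?S" unfolding min_colour_class_def by (rule Min_in)
  then obtain \<phi> i where "min_colour_class V E = card (colour_class V \<phi> i)"
      "proper_colouring V E ?k \<phi>" "i < ?k" by blast
  with colour_class_nonempty fin show ?thesis by (auto simp: card_gt_0_iff colour_class_def)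
qed

lemma chromatic_number_mult_min_colour_class_le:
  assumes "is_graph V E"
  shows "chromatic_number V E * min_colour_class V E \<le> card V"
proof -
  let ?k = "chromatic_number V E"
  have fin: "finite V" using assms unfolding is_graph_def by simp
  obtain \<phi> where \<phi>: "proper_colouring V E ?k \<phi>" using chromatic_number_colouring_exists[OF assms] ..
  have "V = (\<Union>i<?k. colour_class V \<phi> i)"
    using \<phi> unfolding proper_colouring_def colour_class_def by auto
  then have "card V = card (\<Union>i<?k. colour_class V \<phi> i)" by simp
  also have "\<dots> = (\<Sum>i<?k. card (colour_class V \<phi> i))"
    by (rule card_UN_disjoint) (use fin in \<open>auto simp: colour_class_def\<close>)
  finally have "card V = (\<Sum>i<?k. card (colour_class V \<phi> i))" .
  moreover have "(\<Sum>i<?k. min_colour_class V E) \<le> (\<Sum>i<?k. card (colour_class V \<phi> i))"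
    by (intro sum_mono min_colour_class_le[OF fin \<phi>]) simp
  ultimately show ?thesis by simp
qed

definition block_of :: "nat \<Rightarrow> nat \<Rightarrow> nat \<Rightarrow> nat" where
  "block_of r c t = (if t < (r - 1) * c then t div c else r - 1)"

lemma block_of_before_last: "t < (r - 1) * c \<Longrightarrow> block_of r c t = t div c \<and> t div c < r - 1"
  by (cases "c = 0") (auto simp: block_of_def div_less_iff_less_mult)

lemma block_of_less: "r > 0 \<Longrightarrow> block_of r c t < r"
  using block_of_before_last[of t r c] by (auto simp: block_of_def)

lemma block_of_eq_last_iff: "block_of r c t = r - 1 \<longleftrightarrow> (r - 1) * c \<le> t"
  using block_of_before_last[of t r c] by (auto simp: block_of_def)

lemma block_of_last_fibre: "{s \<in> {0..<n}. block_of r c s = r - 1} = {(r - 1) * c..<n}"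
  unfolding block_of_eq_last_iff by auto

lemma card_block_of_fibre_le:
  assumes "n \<le> r * c"
  shows "card {s \<in> {0..<n}. block_of r c s = k} \<le> c"
proof (cases "k < r - 1")
  case True
  have "{s \<in> {0..<n}. block_of r c s = k} \<subseteq> {k * c..<k * c + c}"
  proof
    fix s assume "s \<in> {s \<in> {0..<n}. block_of r c s = k}"
    with True have "s < (r - 1) * c" "s div c = k" by (auto simp: block_of_def split: if_splits)
    moreover from this have "c > 0" by (cases c) auto
    ultimately show "s \<in> {k * c..<k * c + c}"
      using div_times_less_eq_dividend[of s c] dividend_less_div_times[of c s] by (simp add: mult.commute)
  qed
  then have "card {s \<in> {0..<n}. block_of r c s = k} \<le> card {k * c..<k * c + c}"
    by (intro card_mono) auto
  thus ?thesis by simp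
next
  case False
  then have "{s \<in> {0..<n}. block_of r c s = k} \<subseteq> {s \<in> {0..<n}. block_of r c s = r - 1}"
    using block_of_before_last[of _ r c] by (auto simp: block_of_def split: if_splits)
  then have "card {s \<in> {0..<n}. block_of r c s = k} \<le> card {(r - 1) * c..<n}"
    unfolding block_of_last_fibre by (intro card_mono) auto
  also have "\<dots> \<le> c" using assms by (simp add: diff_mult_distrib)
  finally show ?thesis .
qed

definition barrier_graph :: "nat \<Rightarrow> nat \<Rightarrow> nat \<Rightarrow> nat \<times> nat \<Rightarrow> nat \<times> nat \<Rightarrow> bool" where
  "barrier_graph r n c u v \<longleftrightarrow> fst u < r \<and> fst v < r \<and> snd u < n \<and> snd v < n \<and> fst u \<noteq> fst v
      \<and> block_of r c (snd u) \<noteq> block_of r c (snd v)"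

lemma balanced_rpartite_barrier_graph: "balanced_rpartite r n (barrier_graph r n c)"
  unfolding balanced_rpartite_def is_graph_def barrier_graph_def part_class_def by auto

lemma delta_star_geI:
  assumes "r \<ge> 2" "n > 0"
    and "\<And>i j v. i < r \<Longrightarrow> j < r \<Longrightarrow> i \<noteq> j \<Longrightarrow> v \<in> part_class n i
           \<Longrightarrow> d \<le> card {u \<in> part_class n j. E v u}"
  shows "d \<le> delta_star r n E"
proof -
  let ?S = "{card {u \<in> part_class n j. E v u} | v i j.
      i < r \<and> j < r \<and> i \<noteq> j \<and> v \<in> part_class n i}"
  have "?S \<subseteq> {0..n}"
  proof
    fix x assume "x \<in> ?S"
    then obtain v j where x: "x = card {u \<in> part_class n j. E v u}" by blast
    have "card {u \<in> part_class n j. E v u} \<le> card (part_class n j)"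
      by (rule card_mono) (auto simp: part_class_def)
    then show "x \<in> {0..n}" unfolding x by (simp add: part_class_def card_cartesian_product)
  qed
  then have "finite ?S" by (rule finite_subset) simp
  moreover have "0 < r \<and> 1 < r \<and> (0::nat) \<noteq> 1 \<and> (0, 0) \<in> part_class n 0"
    using assms(1,2) by (simp add: part_class_def)
  then have "?S \<noteq> {}" by blast
  ultimately show ?thesis
    unfolding delta_star_def using assms(3) by (auto simp: Min_ge_iff)
qed

lemma delta_star_barrier_graph:
  assumes "r \<ge> 2" "n > 0" "n \<le> r * c"
  shows "n - c \<le> delta_star r n (barrier_graph r n c)"
proof (rule delta_star_geI[OF assms(1,2)])
  fix i j v assume ij: "i < r" "j < r" "i \<noteq> j" and v: "v \<in> part_class n i"
  then obtain t where t: "v = (i, t)" "t < n" unfolding part_class_def by auto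
  let ?F = "{s \<in> {0..<n}. block_of r c s = block_of r c t}"
  have "{u \<in> part_class n j. barrier_graph r n c v u} = {j} \<times> ({0..<n} - ?F)"
    using ij t unfolding part_class_def barrier_graph_def by auto
  moreover have "card ({0..<n} - ?F) = n - card ?F" by (subst card_Diff_subset) auto
  moreover have "card ?F \<le> c" using card_block_of_fibre_le[OF assms(3)] .
  ultimately show "n - c \<le> card {u \<in> part_class n j. barrier_graph r n c v u}"
    by (simp add: card_cartesian_product)
qed

lemma perfect_tiling_card_mult_le:
  assumes tiling: "perfect_tiling VH EH VG EG" and "finite VG" "P \<subseteq> VG"
    and meets: "\<And>f. embeds VH EH VG EG f \<Longrightarrow> m \<le> card (f ` VH \<inter> P)"
  shows "card VG * m \<le> card P * card VH"
proof -
  obtain T where emb: "\<forall>f\<in>T. embeds VH EH VG EG f"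
    and disj: "\<forall>f\<in>T. \<forall>g\<in>T. f ` VH \<noteq> g ` VH \<longrightarrow> f ` VH \<inter> g ` VH = {}"
    and cover: "(\<Union>f\<in>T. f ` VH) = VG"
    using tiling unfolding perfect_tiling_def by blast
  define I where "I = (\<lambda>f. f ` VH) ` T"
  have "I \<subseteq> Pow VG" using cover unfolding I_def by blast
  then have fin: "finite I" "\<And>S. S \<in> I \<Longrightarrow> finite S"
    using \<open>finite VG\<close> by (auto intro: finite_subset)
  have disjI: "\<forall>S\<in>I. \<forall>S'\<in>I. S \<noteq> S' \<longrightarrow> S \<inter> S' = {}" using disj unfolding I_def by auto
  have card_tile: "card S = card VH" if "S \<in> I" for S
    using that emb unfolding I_def embeds_def by (auto simp: card_image)
  have "card VG = card (\<Union>I)" using cover unfolding I_def by simp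
  also have "\<dots> = (\<Sum>S\<in>I. card S)" using fin disjI by (intro card_Union_disjoint) (auto simp: pairwise_def disjnt_def)
  also have "\<dots> = card I * card VH" using card_tile by simp
  finally have card_VG: "card VG = card I * card VH" .
  have "P = (\<Union>S\<in>I. S \<inter> P)" using cover \<open>P \<subseteq> VG\<close> unfolding I_def by auto
  then have "card P = card (\<Union>S\<in>I. S \<inter> P)" by simp
  also have "\<dots> = (\<Sum>S\<in>I. card (S \<inter> P))"
    using fin disjI by (intro card_UN_disjoint) auto
  finally have card_P: "card P = (\<Sum>S\<in>I. card (S \<inter> P))" .
  have "card I * m = (\<Sum>S\<in>I. m)" by simp
  also have "\<dots> \<le> card P" unfolding card_P using emb meets by (intro sum_mono) (auto simp: I_def)
  finally have "card I * m \<le> card P" .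
  then show ?thesis unfolding card_VG by (metis mult.commute mult.left_commute mult_le_mono1)
qed

lemma barrier_graph_no_perfect_tiling:
  assumes "r > 0"
    and min_class: "\<And>\<phi>. proper_colouring VH EH r \<phi> \<Longrightarrow> m \<le> card (colour_class VH \<phi> (r - 1))"
    and small_last_block: "card VH * (n - (r - 1) * c) < m * n"
  shows "\<not> perfect_tiling VH EH ({0..<r} \<times> {0..<n}) (barrier_graph r n c)"
proof
  let ?VG = "{0..<r} \<times> {0..<n}"
  define P where "P = {0..<r} \<times> {s \<in> {0..<n}. block_of r c s = r - 1}"
  assume "perfect_tiling VH EH ?VG (barrier_graph r n c)"
  moreover have "m \<le> card (f ` VH \<inter> P)" if "embeds VH EH ?VG (barrier_graph r n c) f" for f
  proof -
    have f: "inj_on f VH" "f ` VH \<subseteq> ?VG"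
      "\<forall>u\<in>VH. \<forall>v\<in>VH. EH u v \<longrightarrow> barrier_graph r n c (f u) (f v)"
      using that unfolding embeds_def by auto
    define \<phi> where "\<phi> a = block_of r c (snd (f a))" for a
    have "proper_colouring VH EH r \<phi>"
      unfolding proper_colouring_def \<phi>_def using f(3) block_of_less[OF \<open>r > 0\<close>]
      unfolding barrier_graph_def by blast
    then have "m \<le> card (colour_class VH \<phi> (r - 1))" by (rule min_class)
    also have "\<dots> = card (f ` colour_class VH \<phi> (r - 1))"
      by (rule card_image[symmetric], rule inj_on_subset[OF f(1)]) (auto simp: colour_class_def)
    also have "f ` colour_class VH \<phi> (r - 1) = f ` VH \<inter> P"
      using f(2) unfolding colour_class_def \<phi>_def P_def by force
    finally show ?thesis .
  qed
  ultimately have "card ?VG * m \<le> card P * card VH"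
    by (intro perfect_tiling_card_mult_le) (auto simp: P_def)
  moreover have "card P = r * (n - (r - 1) * c)"
    unfolding P_def block_of_last_fibre by (simp add: card_cartesian_product)
  ultimately have "r * (m * n) \<le> r * (card VH * (n - (r - 1) * c))"
    by (simp add: mult.commute mult.left_commute)
  with small_last_block \<open>r > 0\<close> show False by simp
qed

lemma block_width_bounds:
  fixes r h m n c x :: real
  assumes h: "h > 0" and r: "r > 1" and m: "m \<ge> 1" "r * m \<le> h" and n: "r * h \<le> n"
    and x: "h * (r - 1) * x = n * (h - m)" and c: "x < c" "c \<le> x + 1"
  shows "(r - 1) * c \<le> n" "n < r * c" "h * (n - (r - 1) * c) < m * n"
proof -
  have "r * h > 0" using h r by simp
  then have n0: "n \<ge> 0" using n by linarith
  have hxc: "h * (r - 1) * x < h * (r - 1) * c" using c(1) h r by simp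
  have "(r - 1) * h \<le> n" using n h by (simp add: algebra_simps)
  also have "n \<le> n * m" using m(1) n0 by (simp add: mult_le_cancel_left1)
  finally have hr_le: "h * (r - 1) \<le> m * n" by (simp add: algebra_simps)
  have "h * ((r - 1) * c) \<le> h * (r - 1) * (x + 1)" using c(2) h r by (simp add: mult.assoc)
  also have "\<dots> = n * (h - m) + h * (r - 1)" using x by (simp add: algebra_simps)
  also have "\<dots> \<le> h * n" using hr_le by (simp add: algebra_simps)
  finally show "(r - 1) * c \<le> n" using h by simp
  have "h * (r - 1) * n \<le> r * (n * (h - m))"
    using mult_left_mono[OF m(2) n0] by (simp add: algebra_simps)
  also have "\<dots> = r * (h * (r - 1) * x)" using x by simp
  also have "\<dots> < r * (h * (r - 1) * c)" using hxc r by simp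
  finally have "(h * (r - 1)) * n < (h * (r - 1)) * (r * c)" by (simp add: ac_simps)
  moreover have "h * (r - 1) > 0" using h r by simp
  ultimately show "n < r * c" by (simp add: mult_less_cancel_left_pos)
  show "h * (n - (r - 1) * c) < m * n" using hxc x by (simp add: algebra_simps)
qed

lemma barrier_width:
  fixes r h m n c :: nat and x :: real
  assumes r: "r \<ge> 2" and m: "m > 0" "r * m \<le> h" and n: "r * h \<le> n"
    and x: "real h * (real r - 1) * x = real n * (real h - real m)"
    and c: "x < real c" "real c \<le> x + 1"
  shows "(r - 1) * c \<le> n" "n < r * c" "h * (n - (r - 1) * c) < m * n"
proof -
  have "r * m > 0" using m(1) r by simp
  then have h: "real h > 0" using m(2) by (metis of_nat_0_less_iff order.strict_trans2)
  have "real r > 1" "real m \<ge> 1" "real r * real m \<le> real h" "real r * real h \<le> real n"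
    using r m n by (simp_all flip: of_nat_mult)
  note bounds = block_width_bounds[OF h this x c]
  have cast: "real ((r - 1) * c) = (real r - 1) * real c" using r by (simp add: of_nat_diff)
  show width_le: "(r - 1) * c \<le> n" using bounds(1) by (simp only: cast[symmetric] of_nat_le_iff)
  show "n < r * c" using bounds(2) by (simp flip: of_nat_mult)
  have "real (h * (n - (r - 1) * c)) < real (m * n)"
    using bounds(3) by (simp only: of_nat_mult[of h] of_nat_mult[of m] of_nat_diff[OF width_le] cast)
  then show "h * (n - (r - 1) * c) < m * n" by (simp only: of_nat_less_iff)
qed

lemma exists_barrier_graph:
  assumes r: "r \<ge> 2" and m: "m > 0" "r * m \<le> card VH" and n: "r * card VH \<le> n"
    and min_class: "\<And>\<phi>. proper_colouring VH EH r \<phi> \<Longrightarrow> m \<le> card (colour_class VH \<phi> (r - 1))"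
  shows "\<exists>EG. balanced_rpartite r n EG
     \<and> real (delta_star r n EG)
         \<ge> real n - real n * (real (card VH) - real m) / (real (card VH) * (real r - 1)) - 1
     \<and> \<not> perfect_tiling VH EH ({0..<r} \<times> {0..<n}) EG"
proof -
  let ?h = "card VH"
  have "?h > 0" using order.strict_trans2[OF _ m(2)] m(1) r by simp
  then have "n > 0" using order.strict_trans2[OF _ n] r by simp
  define x where "x = real n * (real ?h - real m) / (real ?h * (real r - 1))"
  define c where "c = nat \<lfloor>x\<rfloor> + 1"
  have "x \<ge> 0" using m \<open>?h > 0\<close> r unfolding x_def by (simp add: order.trans[OF _ m(2)])
  then have c: "x < real c" "real c \<le> x + 1" unfolding c_def by linarith+
  have "real ?h * (real r - 1) * x = real n * (real ?h - real m)"
    unfolding x_def using \<open>?h > 0\<close> r by simp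
  note width = barrier_width[OF r m n this c]
  have "real n - x - 1 \<le> real (n - c)" using c width(1) r by (simp add: of_nat_diff)
  also have "\<dots> \<le> real (delta_star r n (barrier_graph r n c))"
    using delta_star_barrier_graph[OF r \<open>n > 0\<close> less_imp_le[OF width(2)]] by simp
  finally have "real n - x - 1 \<le> real (delta_star r n (barrier_graph r n c))" .
  moreover have "\<not> perfect_tiling VH EH ({0..<r} \<times> {0..<n}) (barrier_graph r n c)"
    using barrier_graph_no_perfect_tiling[of r VH EH m n c] min_class width(3) r by simp
  ultimately show ?thesis using balanced_rpartite_barrier_graph unfolding x_def by blast
qed

lemma inverse_chi_cr_eq:
  assumes "card V > 0"
  shows "1 / chi_cr V E = (real (card V) - real (min_colour_class V E))
           / (real (card V) * (real (chromatic_number V E) - 1))"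
  using assms unfolding chi_cr_def sigma_eq_min_colour_class by (simp add: field_simps)

\<comment> \<open>The hypothesis \<open>gcd(H) = 1\<close> only serves to identify \<open>\<chi>\<^sup>*(H)\<close> with \<open>\<chi>\<^sub>c\<^sub>r(H)\<close>.\<close>
theorem mainTheorem9:
  fixes VH :: "'a set" and EH :: "'a \<Rightarrow> 'a \<Rightarrow> bool"
  assumes "is_graph VH EH"
    and "chromatic_number VH EH \<ge> 3"
    and "gcd_is_one VH EH"
  shows "\<exists>N. \<forall>n\<ge>N. \<exists>EG. balanced_rpartite (chromatic_number VH EH) n EG
     \<and> real (delta_star (chromatic_number VH EH) n EG) \<ge> (1 - 1 / chi_cr VH EH) * real n - 1
     \<and> \<not> perfect_tiling VH EH ({0..<chromatic_number VH EH} \<times> {0..<n}) EG"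
proof -
  let ?r = "chromatic_number VH EH" and ?h = "card VH" and ?m = "min_colour_class VH EH"
  have r: "?r \<ge> 2" using assms(2) by simp
  have m: "?m > 0" "?r * ?m \<le> ?h"
    using assms(1) r by (auto intro: min_colour_class_pos chromatic_number_mult_min_colour_class_le)
  have min_class: "?m \<le> card (colour_class VH \<phi> (?r - 1))" if "proper_colouring VH EH ?r \<phi>" for \<phi>
    using min_colour_class_le[OF _ that] assms(1) r unfolding is_graph_def by simp
  have "?h > 0" using order.strict_trans2[OF _ m(2)] m(1) r by simp
  then have "(1 - 1 / chi_cr VH EH) * real n - 1
      = real n - real n * (real ?h - real ?m) / (real ?h * (real ?r - 1)) - 1" for n
    unfolding inverse_chi_cr_eq[OF \<open>?h > 0\<close>] by (simp add: algebra_simps)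
  then show ?thesis
    using exists_barrier_graph[OF r m _ min_class] by (intro exI[of _ "?r * ?h"]) auto
qed

end
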